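(* If $G$ is a graph of girth at least $7$, then $\chi_{\mu_2}(G)\ge \gamma(G)$.
   Context: The girth of $G$ is the length of a shortest cycle (infinite for forests). $\gamma(G)$ is the domination number: the minimum size of a set $D\subseteq V(G)$ such that every vertex outside $D$ has a neighbor in $D$. A set $M\subseteq V(G)$ is a $2$-distance mutual-visibility set if for every two vertices $u,v\in M$ there exists a shortest $u,v$-path of length at most $2$ none of whose internal vertices lies in $M$. $\chi_{\mu_2}(G)$ is the minimum cardinality of a partition of $V(G)$ into $2$-distance mutual-visibility sets. *)

theory Defs
  imports Main "HOL-Library.Extended_Nat" "HOL-Library.Disjoint_Sets"
begin

definition graph :: "'a set \<Rightarrow> ('a \<Rightarrow> 'a \<Rightarrow> bool) \<Rightarrow> bool" where
  "graph V E \<longleftrightarrow> finite V \<and> (\<forall>u v. E u v \<longrightarrow> u \<in> V \<and> v \<in> V)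
     \<and> (\<forall>u v. E u v \<longrightarrow> E v u) \<and> (\<forall>u. \<not> E u u)"

definition is_cycle :: "'a set \<Rightarrow> ('a \<Rightarrow> 'a \<Rightarrow> bool) \<Rightarrow> 'a list \<Rightarrow> bool" where
  "is_cycle V E cs \<longleftrightarrow> length cs \<ge> 3 \<and> distinct cs \<and> set cs \<subseteq> V
     \<and> (\<forall>i < length cs. E (cs ! i) (cs ! ((i + 1) mod length cs)))"

text \<open>Girth: length of a shortest cycle; infinite (\<infinity>) if there is no cycle.\<close>

definition girth :: "'a set \<Rightarrow> ('a \<Rightarrow> 'a \<Rightarrow> bool) \<Rightarrow> enat" where
  "girth V E = Inf {enat (length cs) | cs. is_cycle V E cs}"

definition is_path :: "'a set \<Rightarrow> ('a \<Rightarrow> 'a \<Rightarrow> bool) \<Rightarrow> 'a \<Rightarrow> 'a \<Rightarrow> 'a list \<Rightarrow> bool" where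
  "is_path V E u v xs \<longleftrightarrow> xs \<noteq> [] \<and> hd xs = u \<and> last xs = v \<and> distinct xs
     \<and> set xs \<subseteq> V \<and> (\<forall>i. Suc i < length xs \<longrightarrow> E (xs ! i) (xs ! Suc i))"

definition path_len :: "'a list \<Rightarrow> nat" where
  "path_len xs = length xs - 1"

definition gdist :: "'a set \<Rightarrow> ('a \<Rightarrow> 'a \<Rightarrow> bool) \<Rightarrow> 'a \<Rightarrow> 'a \<Rightarrow> nat" where
  "gdist V E u v = (LEAST n. \<exists>xs. is_path V E u v xs \<and> path_len xs = n)"

definition is_shortest_path :: "'a set \<Rightarrow> ('a \<Rightarrow> 'a \<Rightarrow> bool) \<Rightarrow> 'a \<Rightarrow> 'a \<Rightarrow> 'a list \<Rightarrow> bool" where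
  "is_shortest_path V E u v xs \<longleftrightarrow> is_path V E u v xs \<and> path_len xs = gdist V E u v"

definition internal :: "'a list \<Rightarrow> 'a set" where
  "internal xs = set (butlast (tl xs))"

definition mutual_vis2 :: "'a set \<Rightarrow> ('a \<Rightarrow> 'a \<Rightarrow> bool) \<Rightarrow> 'a set \<Rightarrow> bool" where
  "mutual_vis2 V E M \<longleftrightarrow> M \<subseteq> V \<and> (\<forall>u\<in>M. \<forall>v\<in>M.
     \<exists>xs. is_shortest_path V E u v xs \<and> path_len xs \<le> 2 \<and> internal xs \<inter> M = {})"

definition chi_mu2 :: "'a set \<Rightarrow> ('a \<Rightarrow> 'a \<Rightarrow> bool) \<Rightarrow> nat" where
  "chi_mu2 V E = (LEAST k. \<exists>P. partition_on V P \<and> card P = k \<and> (\<forall>M\<in>P. mutual_vis2 V E M))"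

definition dominating :: "'a set \<Rightarrow> ('a \<Rightarrow> 'a \<Rightarrow> bool) \<Rightarrow> 'a set \<Rightarrow> bool" where
  "dominating V E D \<longleftrightarrow> D \<subseteq> V \<and> (\<forall>v \<in> V - D. \<exists>d\<in>D. E v d)"

definition domination_number :: "'a set \<Rightarrow> ('a \<Rightarrow> 'a \<Rightarrow> bool) \<Rightarrow> nat" where
  "domination_number V E = (LEAST n. \<exists>D. dominating V E D \<and> card D = n)"

end

theory Submission
  imports Defs
begin

(* A 2-distance mutual-visibility set has all its vertices pairwise at distance at most 2.
   In a graph of girth at least 7 such a set lies in the closed neighbourhood of a single
   vertex: two vertices of the set that are not covered by a common centre would close a
   cycle of length at most 6. Choosing one centre per class of an optimal partition therefore
   yields a dominating set with at most chi_mu2 vertices. *)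

definition within_dist2 :: "('a \<Rightarrow> 'a \<Rightarrow> bool) \<Rightarrow> 'a \<Rightarrow> 'a \<Rightarrow> bool" where
  "within_dist2 E u v \<longleftrightarrow> u = v \<or> E u v \<or> (\<exists>c. E u c \<and> E c v)"

definition closed_nbhd :: "('a \<Rightarrow> 'a \<Rightarrow> bool) \<Rightarrow> 'a \<Rightarrow> 'a set" where
  "closed_nbhd E x = insert x {w. E w x}"

lemma girth_le_cycle_length:
  assumes "is_cycle V E cs"
  shows "girth V E \<le> enat (length cs)"
  unfolding girth_def using assms by (blast intro: Inf_lower)

locale girth7_graph =
  fixes V :: "'a set" and E :: "'a \<Rightarrow> 'a \<Rightarrow> bool"
  assumes graph: "graph V E"
    and girth: "girth V E \<ge> 7"
begin

lemma adj_sym: "E u v \<Longrightarrow> E v u"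
  and adj_irrefl: "\<not> E u u"
  and adj_in_V: "E u v \<Longrightarrow> u \<in> V"
  using graph unfolding graph_def by blast+

lemma no_short_cycle:
  assumes "is_cycle V E cs"
  shows "7 \<le> length cs"
  using order_trans[OF girth girth_le_cycle_length[OF assms]] by (simp add: numeral_eq_enat)

lemma no_short_cyclic_sequence:
  assumes "distinct cs" "3 \<le> length cs" "length cs \<le> 6"
    and adj: "\<forall>i \<in> {..<length cs}. E (cs ! i) (cs ! ((i + 1) mod length cs))"
  shows False
proof -
  have "set cs \<subseteq> V"
  proof
    fix x assume "x \<in> set cs"
    then obtain i where "i < length cs" "x = cs ! i" by (auto simp: in_set_conv_nth)
    then show "x \<in> V" using adj adj_in_V by blast
  qed
  with assms have "is_cycle V E cs" unfolding is_cycle_def by blast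
  then have "7 \<le> length cs" by (rule no_short_cycle)
  with assms(3) show False by simp
qed

text \<open>The distinctness hypotheses of the next four lemmas only concern non-consecutive
  vertices; consecutive ones are distinct by irreflexivity.\<close>

lemma no_cycle3: "E a b \<Longrightarrow> E b c \<Longrightarrow> E c a \<Longrightarrow> False"
  by (rule no_short_cyclic_sequence[of "[a,b,c]"])
    (use adj_irrefl in \<open>auto simp: lessThan_nat_numeral lessThan_Suc\<close>)

lemma no_cycle4:
  "E a b \<Longrightarrow> E b c \<Longrightarrow> E c d \<Longrightarrow> E d a \<Longrightarrow> a \<noteq> c \<Longrightarrow> b \<noteq> d \<Longrightarrow> False"
  by (rule no_short_cyclic_sequence[of "[a,b,c,d]"])
    (use adj_irrefl in \<open>auto simp: lessThan_nat_numeral lessThan_Suc\<close>)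

lemma no_cycle5:
  "E a b \<Longrightarrow> E b c \<Longrightarrow> E c d \<Longrightarrow> E d e \<Longrightarrow> E e a \<Longrightarrow>
   a \<noteq> c \<Longrightarrow> a \<noteq> d \<Longrightarrow> b \<noteq> d \<Longrightarrow> b \<noteq> e \<Longrightarrow> c \<noteq> e \<Longrightarrow> False"
  by (rule no_short_cyclic_sequence[of "[a,b,c,d,e]"])
    (use adj_irrefl in \<open>auto simp: lessThan_nat_numeral lessThan_Suc\<close>)

lemma no_cycle6:
  "E a b \<Longrightarrow> E b c \<Longrightarrow> E c d \<Longrightarrow> E d e \<Longrightarrow> E e f \<Longrightarrow> E f a \<Longrightarrow>
   a \<noteq> c \<Longrightarrow> a \<noteq> d \<Longrightarrow> a \<noteq> e \<Longrightarrow> b \<noteq> d \<Longrightarrow> b \<noteq> e \<Longrightarrow> b \<noteq> f \<Longrightarrow>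
   c \<noteq> e \<Longrightarrow> c \<noteq> f \<Longrightarrow> d \<noteq> f \<Longrightarrow> False"
  by (rule no_short_cyclic_sequence[of "[a,b,c,d,e,f]"])
    (use adj_irrefl in \<open>auto simp: lessThan_nat_numeral lessThan_Suc\<close>)

lemma common_neighbour_unique:
  assumes "E u a" "E a v" "E u b" "E b v" "u \<noteq> v"
  shows "a = b"
  using no_cycle4[of u a v b] assms adj_sym by blast

lemma within_dist2_edge_ends_adj:
  assumes uv: "E u v" and "w \<noteq> u" "\<not> E w u"
    and wu: "within_dist2 E w u" and wv: "within_dist2 E w v"
  shows "E w v"
proof (rule ccontr)
  assume "\<not> E w v"
  from wu obtain a where wa: "E w a" and au: "E a u"
    using \<open>w \<noteq> u\<close> \<open>\<not> E w u\<close> unfolding within_dist2_def by blast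
  from wv obtain b where wb: "E w b" and bv: "E b v"
    using \<open>\<not> E w u\<close> \<open>\<not> E w v\<close> uv adj_sym unfolding within_dist2_def by blast
  show False
  proof (cases "a = b")
    case True
    then show False using no_cycle3[of a u v] au uv bv adj_sym by blast
  next
    case False
    show False
      using no_cycle5[of w a u v b] wa au uv bv wb False assms(2) \<open>\<not> E w u\<close> \<open>\<not> E w v\<close> adj_sym
      by blast
  qed
qed

lemma within_dist2_set_edge_cover:
  assumes pairwise: "\<forall>x\<in>M. \<forall>y\<in>M. within_dist2 E x y"
    and "u \<in> M" "v \<in> M" "E u v"
  shows "M \<subseteq> closed_nbhd E u \<or> M \<subseteq> closed_nbhd E v"
proof (rule ccontr)
  assume "\<not> ?thesis"
  then obtain w1 w2 where w1: "w1 \<in> M" "w1 \<noteq> u" "\<not> E w1 u"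
    and w2: "w2 \<in> M" "w2 \<noteq> v" "\<not> E w2 v"
    unfolding closed_nbhd_def by blast
  have w1v: "E w1 v"
    using within_dist2_edge_ends_adj[OF \<open>E u v\<close> w1(2,3)] pairwise w1(1) assms(2,3) by blast
  have w2u: "E w2 u"
    using within_dist2_edge_ends_adj[OF adj_sym[OF \<open>E u v\<close>] w2(2,3)] pairwise w2(1) assms(2,3)
    by blast
  have "w1 \<noteq> w2" using w1(3) w2u by blast
  with pairwise w1(1) w2(1) consider "E w1 w2" | c where "E w1 c" "E c w2"
    unfolding within_dist2_def by blast
  then show False
  proof cases
    case 1
    then show False
      using no_cycle4[of w1 v u w2] w1v w2u \<open>E u v\<close> w1 w2 adj_sym by blast
  next
    case (2 c)
    then have "c \<noteq> u" "c \<noteq> v" using w1(3) w2(3) adj_sym by blast+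
    then show False
      using no_cycle5[of w1 v u w2 c] 2 w1v w2u \<open>E u v\<close> w1 w2 \<open>w1 \<noteq> w2\<close> adj_sym by blast
  qed
qed

lemma within_dist2_set_nonedge_cover:
  assumes pairwise: "\<forall>x\<in>M. \<forall>y\<in>M. within_dist2 E x y"
    and "u \<in> M" and isolated: "\<forall>w\<in>M. \<not> E u w" and "v \<in> M" "v \<noteq> u"
  shows "\<exists>x. E u x \<and> M \<subseteq> closed_nbhd E x"
proof -
  obtain x where ux: "E u x" and xv: "E x v"
    using pairwise assms(2,4,5) isolated unfolding within_dist2_def by fastforce
  have "w = x \<or> E w x" if "w \<in> M" for w
  proof (rule ccontr)
    assume nwx: "\<not> (w = x \<or> E w x)"
    then have "w \<noteq> u" "w \<noteq> v" using ux xv adj_sym by blast+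
    then obtain b where ub: "E u b" and bw: "E b w"
      using pairwise assms(2) \<open>w \<in> M\<close> isolated unfolding within_dist2_def by fastforce
    have "b \<noteq> x" using bw nwx adj_sym by blast
    have "v \<noteq> b" using ub isolated assms(4) by blast
    from pairwise assms(4) \<open>w \<in> M\<close> \<open>w \<noteq> v\<close> consider "E v w" | c where "E v c" "E c w"
      unfolding within_dist2_def by fastforce
    then show False
    proof cases
      case 1
      then show False
        using no_cycle5[of u x v w b] ux xv bw ub \<open>w \<noteq> u\<close> \<open>b \<noteq> x\<close> \<open>v \<noteq> b\<close> nwx assms(5)
          adj_sym by blast
    next
      case (2 c)
      show False
      proof (cases "c = b")
        case True
        then show False
          using common_neighbour_unique[of u x v b] ux xv ub 2 assms(5) \<open>b \<noteq> x\<close> adj_sym by blast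
      next
        case False
        have "c \<noteq> u" using 2 isolated assms(4) adj_sym by blast
        then show False
          using no_cycle6[of u x v c w b] ux xv 2 bw ub False \<open>w \<noteq> u\<close> \<open>w \<noteq> v\<close>
            \<open>b \<noteq> x\<close> \<open>v \<noteq> b\<close> nwx assms(5) adj_sym by blast
      qed
    qed
  qed
  with ux show ?thesis unfolding closed_nbhd_def by blast
qed

lemma within_dist2_set_in_closed_nbhd:
  assumes "M \<subseteq> V" "M \<noteq> {}" and pairwise: "\<forall>x\<in>M. \<forall>y\<in>M. within_dist2 E x y"
  shows "\<exists>x\<in>V. M \<subseteq> closed_nbhd E x"
proof -
  obtain u where "u \<in> M" using assms(2) by blast
  consider v where "v \<in> M" "E u v" | "M = {u}" | v where "\<forall>w\<in>M. \<not> E u w" "v \<in> M" "v \<noteq> u"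
    using \<open>u \<in> M\<close> by blast
  then show ?thesis
  proof cases
    case (1 v)
    then have "M \<subseteq> closed_nbhd E u \<or> M \<subseteq> closed_nbhd E v"
      by (intro within_dist2_set_edge_cover[OF pairwise \<open>u \<in> M\<close>])
    with 1 \<open>u \<in> M\<close> assms(1) show ?thesis by blast
  next
    case 2
    then show ?thesis using assms(1) unfolding closed_nbhd_def by blast
  next
    case (3 v)
    then obtain x where "E u x" "M \<subseteq> closed_nbhd E x"
      using within_dist2_set_nonedge_cover[OF pairwise \<open>u \<in> M\<close>] by blast
    moreover from \<open>E u x\<close> have "x \<in> V" by (rule adj_in_V[OF adj_sym])
    ultimately show ?thesis by blast
  qed
qed

end

lemma mutual_vis2_within_dist2:
  assumes "mutual_vis2 V E M" "u \<in> M" "v \<in> M"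
  shows "within_dist2 E u v"
proof -
  obtain xs where "is_path V E u v xs" and "path_len xs \<le> 2"
    using assms unfolding mutual_vis2_def is_shortest_path_def by blast
  then have "xs \<noteq> []" and "length xs \<le> 3" and u: "u = xs ! 0" and v: "v = xs ! (length xs - 1)"
    and adj: "\<And>i. Suc i < length xs \<Longrightarrow> E (xs ! i) (xs ! Suc i)"
    unfolding is_path_def path_len_def by (auto simp: hd_conv_nth last_conv_nth)
  then have "length xs = 1 \<or> length xs = 2 \<or> length xs = 3"
    using length_greater_0_conv[of xs] by linarith
  then consider "length xs = 1" | "length xs = 2" | "length xs = 3" by blast
  then show ?thesis
  proof cases
    case 3
    then have "E (xs ! 0) (xs ! 1)" "E (xs ! 1) (xs ! 2)"
      using adj[of 0] adj[of 1] by (simp_all add: numeral_2_eq_2)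
    then show ?thesis unfolding within_dist2_def u v 3 by auto
  qed (use adj in \<open>auto simp: within_dist2_def u v\<close>)
qed

lemma mutual_vis2_singleton:
  assumes "v \<in> V"
  shows "mutual_vis2 V E {v}"
proof -
  have path: "is_path V E v v [v]" using assms unfolding is_path_def by simp
  then have "gdist V E v v = 0"
    unfolding gdist_def by (intro Least_eq_0) (auto simp: path_len_def)
  with path have "is_shortest_path V E v v [v]"
    unfolding is_shortest_path_def path_len_def by simp
  with assms show ?thesis unfolding mutual_vis2_def internal_def path_len_def by auto
qed

lemma chi_mu2_attained:
  obtains P where "partition_on V P" "card P = chi_mu2 V E" "\<forall>M\<in>P. mutual_vis2 V E M"
proof -
  have "\<exists>P. partition_on V P \<and> card P = card ((\<lambda>v. {v}) ` V) \<and> (\<forall>M\<in>P. mutual_vis2 V E M)"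
    by (auto intro!: exI[of _ "(\<lambda>v. {v}) ` V"] partition_on_singletons mutual_vis2_singleton)
  then show ?thesis
    using LeastI_ex[where P = "\<lambda>k. \<exists>P. partition_on V P \<and> card P = k \<and> (\<forall>M\<in>P. mutual_vis2 V E M)"]
      that unfolding chi_mu2_def by blast
qed

lemma domination_number_le_card:
  "dominating V E D \<Longrightarrow> domination_number V E \<le> card D"
  unfolding domination_number_def by (blast intro: Least_le)

lemma domination_number_le_closed_nbhd_cover:
  assumes "finite P" "partition_on V P" and centres: "\<forall>M\<in>P. \<exists>x\<in>V. M \<subseteq> closed_nbhd E x"
  shows "domination_number V E \<le> card P"
proof -
  obtain centre where centre: "\<And>M. M \<in> P \<Longrightarrow> centre M \<in> V \<and> M \<subseteq> closed_nbhd E (centre M)"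
    using centres by metis
  have "dominating V E (centre ` P)"
    unfolding dominating_def
  proof (intro conjI ballI)
    show "centre ` P \<subseteq> V" using centre by blast
  next
    fix v assume v: "v \<in> V - centre ` P"
    then obtain M where "M \<in> P" "v \<in> M" using partition_onD1[OF assms(2)] by blast
    with v centre show "\<exists>d\<in>centre ` P. E v d" unfolding closed_nbhd_def by blast
  qed
  then have "domination_number V E \<le> card (centre ` P)" by (rule domination_number_le_card)
  also have "\<dots> \<le> card P" using assms(1) by (rule card_image_le)
  finally show ?thesis .
qed

theorem theorem3p4:
  fixes V :: "'a set" and E :: "'a \<Rightarrow> 'a \<Rightarrow> bool"
  assumes "graph V E"
    and "girth V E \<ge> 7"
  shows "chi_mu2 V E \<ge> domination_number V E"
proof -
  interpret girth7_graph V E using assms by unfold_locales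
  obtain P where P: "partition_on V P" "card P = chi_mu2 V E" "\<forall>M\<in>P. mutual_vis2 V E M"
    by (rule chi_mu2_attained)
  have "finite P" using assms(1) P(1) unfolding graph_def by (blast intro: finite_elements)
  moreover have "\<exists>x\<in>V. M \<subseteq> closed_nbhd E x" if "M \<in> P" for M
  proof (rule within_dist2_set_in_closed_nbhd)
    show "M \<subseteq> V" "M \<noteq> {}" using P(1) \<open>M \<in> P\<close> by (auto dest: partition_onD1 partition_onD3)
    show "\<forall>x\<in>M. \<forall>y\<in>M. within_dist2 E x y"
      using P(3) \<open>M \<in> P\<close> by (blast intro: mutual_vis2_within_dist2)
  qed
  ultimately have "domination_number V E \<le> card P"
    using P(1) by (blast intro: domination_number_le_closed_nbhd_cover)
  with P(2) show ?thesis by simp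
qed

end
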